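(* For every integer $k\ge 6$, there are infinitely many (pairwise non-isomorphic) $k$-vertex-critical graphs that are simultaneously $2P_2$-free, $(K_3+P_1)$-free and $C_5$-free.
   Context: $\chi(G)$ denotes the chromatic number of $G$. A graph $G$ is $k$-vertex-critical if $\chi(G)=k$ and $\chi(G-v)<k$ for every vertex $v$ of $G$. $2P_2$ is the disjoint union of two copies of the path on two vertices; $K_3+P_1$ is the disjoint union of a triangle and an isolated vertex; $C_5$ is the 5-cycle. A graph is $H$-free if it contains no induced subgraph isomorphic to $H$. *)

theory Defs
  imports Main
begin

type_synonym 'a graph = "'a set \<times> 'a set set"

definition verts :: "'a graph \<Rightarrow> 'a set" where "verts G = fst G"
definition edges :: "'a graph \<Rightarrow> 'a set set" where "edges G = snd G"

definition fin_graph :: "'a graph \<Rightarrow> bool" where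
  "fin_graph G \<longleftrightarrow> finite (verts G) \<and>
     (\<forall>e\<in>edges G. \<exists>u v. e = {u, v} \<and> u \<noteq> v \<and> u \<in> verts G \<and> v \<in> verts G)"

definition adj :: "'a graph \<Rightarrow> 'a \<Rightarrow> 'a \<Rightarrow> bool" where
  "adj G u v \<longleftrightarrow> {u, v} \<in> edges G"

definition colourable :: "'a graph \<Rightarrow> nat \<Rightarrow> bool" where
  "colourable G k \<longleftrightarrow> (\<exists>c :: 'a \<Rightarrow> nat. (\<forall>v\<in>verts G. c v < k) \<and>
      (\<forall>u\<in>verts G. \<forall>v\<in>verts G. adj G u v \<longrightarrow> c u \<noteq> c v))"

definition chromatic_number :: "'a graph \<Rightarrow> nat" where
  "chromatic_number G = (LEAST k. colourable G k)"

definition delete_vertex :: "'a graph \<Rightarrow> 'a \<Rightarrow> 'a graph" where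
  "delete_vertex G v = (verts G - {v}, {e\<in>edges G. v \<notin> e})"

definition vertex_critical :: "nat \<Rightarrow> 'a graph \<Rightarrow> bool" where
  "vertex_critical k G \<longleftrightarrow> chromatic_number G = k \<and>
     (\<forall>v\<in>verts G. chromatic_number (delete_vertex G v) < k)"

definition graph_iso :: "'a graph \<Rightarrow> 'b graph \<Rightarrow> bool" where
  "graph_iso G H \<longleftrightarrow> (\<exists>f. bij_betw f (verts G) (verts H) \<and>
     (\<forall>u\<in>verts G. \<forall>v\<in>verts G. adj H (f u) (f v) \<longleftrightarrow> adj G u v))"

definition contains_induced :: "'a graph \<Rightarrow> 'b graph \<Rightarrow> bool" where
  "contains_induced G H \<longleftrightarrow> (\<exists>f. inj_on f (verts H) \<and> f ` verts H \<subseteq> verts G \<and>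
     (\<forall>u\<in>verts H. \<forall>v\<in>verts H. adj G (f u) (f v) \<longleftrightarrow> adj H u v))"

definition H_free :: "'b graph \<Rightarrow> 'a graph \<Rightarrow> bool" where
  "H_free H G \<longleftrightarrow> \<not> contains_induced G H"

definition two_P2 :: "nat graph" where
  "two_P2 = ({0,1,2,3}, {{0,1},{2,3}})"

definition K3_plus_P1 :: "nat graph" where
  "K3_plus_P1 = ({0,1,2,3}, {{0,1},{1,2},{0,2}})"

definition C5 :: "nat graph" where
  "C5 = ({0,1,2,3,4}, {{0,1},{1,2},{2,3},{3,4},{4,0}})"

end

theory Submission
  imports Defs "HOL-Library.Infinite_Set"
begin

text \<open>
  Take the complement of the \<open>p\<close>-th power of the cycle on \<open>n = (k - 1)(p + 1) + 1\<close>
  vertices: two residues mod \<open>n\<close> are adjacent when their cyclic distance exceeds \<open>p\<close>.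
  An independent set has cyclic diameter at most \<open>p\<close>, so it has at most \<open>p + 1\<close>
  elements and more than \<open>k - 1\<close> colours are needed; cutting the cycle into arcs of
  \<open>p + 1\<close> consecutive vertices gives a \<open>k\<close>-colouring, and a \<open>(k - 1)\<close>-colouring once
  the cycle has been opened at a deleted vertex. An induced \<open>2P\<^sub>2\<close>, \<open>K\<^sub>3 + P\<^sub>1\<close> or
  \<open>C\<^sub>5\<close> would be a solution of a small system of linear inequalities, and these systems
  are infeasible as soon as \<open>n > 5p\<close>, which is where \<open>k \<ge> 6\<close> is needed. Different
  values of \<open>p\<close> give graphs of different orders.
\<close>

definition independent_set :: "'a graph \<Rightarrow> 'a set \<Rightarrow> bool" where
  "independent_set G I \<longleftrightarrow> I \<subseteq> verts G \<and> (\<forall>u\<in>I. \<forall>v\<in>I. \<not> adj G u v)"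

lemma card_verts_le_if_colourable:
  assumes "finite (verts G)"
    and independent_card: "\<And>I. independent_set G I \<Longrightarrow> card I \<le> \<alpha>"
    and "colourable G j"
  shows "card (verts G) \<le> j * \<alpha>"
proof -
  obtain c where c_range: "\<forall>v\<in>verts G. c v < j"
    and c_proper: "\<forall>u\<in>verts G. \<forall>v\<in>verts G. adj G u v \<longrightarrow> c u \<noteq> c v"
    using \<open>colourable G j\<close> unfolding colourable_def by blast
  define colour_class where "colour_class i = {v \<in> verts G. c v = i}" for i
  have "independent_set G (colour_class i)" for i
    using c_proper unfolding independent_set_def colour_class_def by fastforce
  then have colour_class_card: "card (colour_class i) \<le> \<alpha>" for i
    by (rule independent_card)
  have "verts G = (\<Union>i<j. colour_class i)"
    using c_range unfolding colour_class_def by auto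
  then have "card (verts G) \<le> (\<Sum>i<j. card (colour_class i))"
    by (metis card_UN_le finite_lessThan)
  also have "\<dots> \<le> j * \<alpha>"
    using sum_bounded_above[of "{..<j}" "\<lambda>i. card (colour_class i)" \<alpha>] colour_class_card by simp
  finally show ?thesis .
qed

lemma chromatic_number_eqI:
  assumes "colourable G k" and "\<And>j. colourable G j \<Longrightarrow> k \<le> j"
  shows "chromatic_number G = k"
  unfolding chromatic_number_def by (rule Least_equality) (use assms in auto)

lemma chromatic_number_le:
  "colourable G k \<Longrightarrow> chromatic_number G \<le> k"
  unfolding chromatic_number_def by (rule Least_le)

lemma verts_delete_vertex: "verts (delete_vertex G v) = verts G - {v}"
  by (simp add: delete_vertex_def verts_def)

lemma adj_delete_vertexD: "adj (delete_vertex G v) x y \<Longrightarrow> adj G x y"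
  by (simp add: adj_def delete_vertex_def edges_def)

lemma graph_iso_card_verts: "graph_iso G H \<Longrightarrow> card (verts G) = card (verts H)"
  unfolding graph_iso_def by (metis bij_betw_same_card)

text \<open>For representatives \<open>0 \<le> x, y < n\<close> of residues mod \<open>n\<close>, the cyclic distance is
  \<open>min \<bar>x - y\<bar> (n - \<bar>x - y\<bar>)\<close>, so this says that it exceeds \<open>p\<close>.\<close>

definition cyclic_far :: "int \<Rightarrow> int \<Rightarrow> int \<Rightarrow> int \<Rightarrow> bool" where
  "cyclic_far n p x y \<longleftrightarrow> p < \<bar>x - y\<bar> \<and> \<bar>x - y\<bar> < n - p"

definition cycle_power_compl :: "nat \<Rightarrow> nat \<Rightarrow> nat graph" where
  "cycle_power_compl n p =
     ({..<n}, {{x, y} | x y. x < n \<and> y < n \<and> cyclic_far (int n) (int p) (int x) (int y)})"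

lemma cyclic_far_sym: "cyclic_far n p x y \<longleftrightarrow> cyclic_far n p y x"
  unfolding cyclic_far_def by (simp add: abs_minus_commute)

lemma cyclic_far_irrefl: "0 \<le> p \<Longrightarrow> \<not> cyclic_far n p x x"
  unfolding cyclic_far_def by simp

lemma cyclic_far_rotate:
  fixes x y r n :: nat
  assumes "x < n" "y < n" "r \<le> n"
  shows "cyclic_far (int n) (int p) (int ((x + r) mod n)) (int ((y + r) mod n))
     \<longleftrightarrow> cyclic_far (int n) (int p) (int x) (int y)"
proof -
  have rotate: "int ((z + r) mod n) = int z + int r - (if z + r < n then 0 else int n)"
    if "z < n" for z
  proof -
    have "(z + r) mod n = (if z + r < n then z + r else z + r - n)"
      using that assms(3) by (simp add: mod_if)
    then show ?thesis by (simp add: of_nat_diff)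
  qed
  show ?thesis
    using assms unfolding cyclic_far_def rotate[OF assms(1)] rotate[OF assms(2)]
    by (auto split: abs_split)
qed

lemma same_block_not_cyclic_far:
  fixes x y :: nat
  assumes "x div (p + 1) = y div (p + 1)"
  shows "\<not> cyclic_far n (int p) (int x) (int y)"
proof -
  have "x < y + (p + 1)" "y < x + (p + 1)"
    using dividend_less_div_times[of "p + 1" x] dividend_less_div_times[of "p + 1" y]
      div_times_less_eq_dividend[of x "p + 1"] div_times_less_eq_dividend[of y "p + 1"] assms
    by auto
  then show ?thesis
    unfolding cyclic_far_def by auto
qed

lemma verts_cycle_power_compl: "verts (cycle_power_compl n p) = {..<n}"
  by (simp add: cycle_power_compl_def verts_def)

lemma adj_cycle_power_compl:
  "adj (cycle_power_compl n p) x y \<longleftrightarrow> x < n \<and> y < n \<and> cyclic_far (int n) (int p) (int x) (int y)"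
  unfolding adj_def edges_def cycle_power_compl_def
  by (auto simp: doubleton_eq_iff cyclic_far_sym)

lemma fin_graph_cycle_power_compl: "fin_graph (cycle_power_compl n p)"
  unfolding fin_graph_def verts_cycle_power_compl
proof (intro conjI ballI)
  fix e assume "e \<in> edges (cycle_power_compl n p)"
  then obtain x y where "e = {x, y}" "x < n" "y < n" "cyclic_far (int n) (int p) (int x) (int y)"
    by (auto simp: cycle_power_compl_def edges_def)
  moreover from this have "x \<noteq> y"
    using cyclic_far_irrefl[of "int p"] by auto
  ultimately show "\<exists>u v. e = {u, v} \<and> u \<noteq> v \<and> u \<in> {..<n} \<and> v \<in> {..<n}"
    by blast
qed simp

lemma contains_induced_cycle_power_complE:
  assumes "contains_induced (cycle_power_compl n p) H"
  obtains g :: "'b \<Rightarrow> int"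
  where "\<forall>u\<in>verts H. 0 \<le> g u \<and> g u < int n"
    and "\<forall>u\<in>verts H. \<forall>v\<in>verts H. cyclic_far (int n) (int p) (g u) (g v) \<longleftrightarrow> adj H u v"
proof -
  obtain f where "f ` verts H \<subseteq> {..<n}"
    and "\<forall>u\<in>verts H. \<forall>v\<in>verts H. adj (cycle_power_compl n p) (f u) (f v) \<longleftrightarrow> adj H u v"
    using assms unfolding contains_induced_def verts_cycle_power_compl by blast
  then show thesis
    by (intro that[of "\<lambda>u. int (f u)"]) (auto simp: adj_cycle_power_compl image_subset_iff)
qed

text \<open>In the cyclic power itself these are an induced \<open>C\<^sub>4\<close>, an induced claw and an
  induced \<open>C\<^sub>5\<close>.\<close>

lemma no_cyclic_far_2P2:
  fixes n p a b c d :: int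
  assumes "4 * p < n" "0 \<le> p"
    and "0 \<le> a" "a < n" "0 \<le> b" "b < n" "0 \<le> c" "c < n" "0 \<le> d" "d < n"
    and "cyclic_far n p a b" "cyclic_far n p c d"
    and "\<not> cyclic_far n p a c" "\<not> cyclic_far n p a d"
    and "\<not> cyclic_far n p b c" "\<not> cyclic_far n p b d"
  shows False
  using assms unfolding cyclic_far_def by (smt (z3))

lemma no_cyclic_far_K3_plus_P1:
  fixes n p a b c d :: int
  assumes "0 \<le> p" "0 \<le> a" "a < n" "0 \<le> b" "b < n" "0 \<le> c" "c < n" "0 \<le> d" "d < n"
    and "cyclic_far n p a b" "cyclic_far n p b c" "cyclic_far n p a c"
    and "\<not> cyclic_far n p a d" "\<not> cyclic_far n p b d" "\<not> cyclic_far n p c d"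
  shows False
  using assms unfolding cyclic_far_def by (smt (z3))

lemma no_cyclic_far_C5:
  fixes n p a b c d e :: int
  assumes "5 * p < n" "0 \<le> p"
    and "0 \<le> a" "a < n" "0 \<le> b" "b < n" "0 \<le> c" "c < n" "0 \<le> d" "d < n" "0 \<le> e" "e < n"
    and "cyclic_far n p a b" "cyclic_far n p b c" "cyclic_far n p c d"
    and "cyclic_far n p d e" "cyclic_far n p e a"
    and "\<not> cyclic_far n p a c" "\<not> cyclic_far n p a d" "\<not> cyclic_far n p b d"
    and "\<not> cyclic_far n p b e" "\<not> cyclic_far n p c e"
  shows False
  using assms unfolding cyclic_far_def by (smt (z3))

lemma H_free_2P2_cycle_power_compl:
  assumes "4 * p < n"
  shows "H_free two_P2 (cycle_power_compl n p)"
  unfolding H_free_def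
proof
  assume "contains_induced (cycle_power_compl n p) two_P2"
  then obtain g where g_range: "\<forall>u\<in>verts two_P2. 0 \<le> g u \<and> g u < int n"
    and g_far: "\<forall>u\<in>verts two_P2. \<forall>v\<in>verts two_P2.
      cyclic_far (int n) (int p) (g u) (g v) \<longleftrightarrow> adj two_P2 u v"
    by (rule contains_induced_cycle_power_complE)
  show False
    using g_range g_far assms
    by (intro no_cyclic_far_2P2[of "int p" "int n" "g 0" "g 1" "g 2" "g 3"])
      (simp_all add: two_P2_def verts_def adj_def edges_def doubleton_eq_iff)
qed

lemma H_free_K3_plus_P1_cycle_power_compl: "H_free K3_plus_P1 (cycle_power_compl n p)"
  unfolding H_free_def
proof
  assume "contains_induced (cycle_power_compl n p) K3_plus_P1"
  then obtain g where g_range: "\<forall>u\<in>verts K3_plus_P1. 0 \<le> g u \<and> g u < int n"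
    and g_far: "\<forall>u\<in>verts K3_plus_P1. \<forall>v\<in>verts K3_plus_P1.
      cyclic_far (int n) (int p) (g u) (g v) \<longleftrightarrow> adj K3_plus_P1 u v"
    by (rule contains_induced_cycle_power_complE)
  show False
    using g_range g_far
    by (intro no_cyclic_far_K3_plus_P1[of "int p" "g 0" "int n" "g 1" "g 2" "g 3"])
      (simp_all add: K3_plus_P1_def verts_def adj_def edges_def doubleton_eq_iff)
qed

lemma H_free_C5_cycle_power_compl:
  assumes "5 * p < n"
  shows "H_free C5 (cycle_power_compl n p)"
  unfolding H_free_def
proof
  assume "contains_induced (cycle_power_compl n p) C5"
  then obtain g where g_range: "\<forall>u\<in>verts C5. 0 \<le> g u \<and> g u < int n"
    and g_far: "\<forall>u\<in>verts C5. \<forall>v\<in>verts C5.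
      cyclic_far (int n) (int p) (g u) (g v) \<longleftrightarrow> adj C5 u v"
    by (rule contains_induced_cycle_power_complE)
  show False
    using g_range g_far assms
    by (intro no_cyclic_far_C5[of "int p" "int n" "g 0" "g 1" "g 2" "g 3" "g 4"])
      (simp_all add: C5_def verts_def adj_def edges_def doubleton_eq_iff)
qed

lemma card_le_of_diameter:
  fixes S :: "int set"
  assumes "\<forall>x\<in>S. \<forall>y\<in>S. \<bar>x - y\<bar> \<le> int p"
  shows "card S \<le> p + 1"
proof (cases "finite S \<and> S \<noteq> {}")
  case True
  have "S \<subseteq> {Min S .. Min S + int p}"
    using True assms Min_in[of S] by fastforce
  then have "card S \<le> card {Min S .. Min S + int p}"
    by (intro card_mono) auto
  then show ?thesis by simp
qed auto

lemma unwrap_close: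
  fixes n p a x y :: int
  assumes "3 * p < n" "0 \<le> p" "0 \<le> a" "a \<le> x" "a \<le> y" "x < n" "y < n"
    and "\<not> cyclic_far n p x y" "\<not> cyclic_far n p a x" "\<not> cyclic_far n p a y"
  shows "\<bar>(if a + n - p \<le> x then x - n else x) - (if a + n - p \<le> y then y - n else y)\<bar> \<le> p"
  using assms unfolding cyclic_far_def by (smt (z3))

text \<open>An independent set is an arc of length at most \<open>p\<close> of the cycle; measured from its
  least element \<open>a\<close>, the part of the arc lying before \<open>a\<close> is unwrapped by subtracting \<open>n\<close>.\<close>

lemma card_independent_set_cycle_power_compl:
  assumes "3 * p < n" and independent: "independent_set (cycle_power_compl n p) I"
  shows "card I \<le> p + 1"
proof (cases "I = {}")
  case False
  have I_range: "I \<subseteq> {..<n}"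
    using independent unfolding independent_set_def verts_cycle_power_compl by simp
  have not_far: "\<not> cyclic_far (int n) (int p) (int x) (int y)" if "x \<in> I" "y \<in> I" for x y
    using independent that I_range unfolding independent_set_def adj_cycle_power_compl by blast
  define a where "a = Min I"
  have "finite I"
    using I_range finite_subset by blast
  then have a: "a \<in> I" "\<forall>x\<in>I. a \<le> x"
    using False unfolding a_def by simp_all
  define unwrap where
    "unwrap x = (if int a + int n - int p \<le> int x then int x - int n else int x)" for x
  have "inj_on unwrap I"
    using I_range by (intro inj_onI) (auto simp: unwrap_def split: if_splits)
  moreover have "\<forall>u\<in>unwrap ` I. \<forall>v\<in>unwrap ` I. \<bar>u - v\<bar> \<le> int p"
  proof (intro ballI)
    fix u v assume "u \<in> unwrap ` I" "v \<in> unwrap ` I"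
    then obtain x y where "x \<in> I" "y \<in> I" "u = unwrap x" "v = unwrap y"
      by blast
    moreover from this have "\<bar>unwrap x - unwrap y\<bar> \<le> int p"
      unfolding unwrap_def by (intro unwrap_close) (use a I_range not_far assms(1) in auto)
    ultimately show "\<bar>u - v\<bar> \<le> int p"
      by simp
  qed
  ultimately show ?thesis
    using card_le_of_diameter card_image by metis
qed simp

lemma colourable_cycle_power_compl:
  assumes "n \<le> m * (p + 1)"
  shows "colourable (cycle_power_compl n p) m"
  unfolding colourable_def verts_cycle_power_compl
proof (intro exI[of _ "\<lambda>x. x div (p + 1)"] conjI ballI impI)
  fix x assume "x \<in> {..<n}"
  then show "x div (p + 1) < m"
    using assms by (simp add: less_mult_imp_div_less)
next
  fix x y assume "adj (cycle_power_compl n p) x y"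
  then show "x div (p + 1) \<noteq> y div (p + 1)"
    using same_block_not_cyclic_far by (auto simp: adj_cycle_power_compl)
qed

lemma colourable_delete_vertex_cycle_power_compl:
  assumes "v < n" "n - 1 \<le> m * (p + 1)"
  shows "colourable (delete_vertex (cycle_power_compl n p) v) m"
proof -
  define rot where "rot x = (x + (n - Suc v)) mod n" for x
  have rot_less: "rot x < n - 1" if "x < n" "x \<noteq> v" for x
    using that assms(1) unfolding rot_def by (auto simp: mod_if)
  show ?thesis
    unfolding colourable_def verts_delete_vertex verts_cycle_power_compl
  proof (intro exI[of _ "\<lambda>x. rot x div (p + 1)"] conjI ballI impI)
    fix x assume "x \<in> {..<n} - {v}"
    then have "rot x < m * (p + 1)"
      using rot_less assms(2) by fastforce
    then show "rot x div (p + 1) < m"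
      by (rule less_mult_imp_div_less)
  next
    fix x y assume "adj (delete_vertex (cycle_power_compl n p) v) x y"
    then have "x < n" "y < n" "cyclic_far (int n) (int p) (int x) (int y)"
      by (auto dest: adj_delete_vertexD simp: adj_cycle_power_compl)
    then have "cyclic_far (int n) (int p) (int (rot x)) (int (rot y))"
      unfolding rot_def by (simp add: cyclic_far_rotate)
    then show "rot x div (p + 1) \<noteq> rot y div (p + 1)"
      using same_block_not_cyclic_far by blast
  qed
qed

lemma vertex_critical_cycle_power_compl:
  assumes "4 \<le> k"
  shows "vertex_critical k (cycle_power_compl ((k - 1) * (p + 1) + 1) p)"
    (is "vertex_critical k (cycle_power_compl ?n p)")
proof -
  have "3 * (p + 1) \<le> (k - 1) * (p + 1)"
    using assms by (intro mult_right_mono) auto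
  then have "3 * p < ?n"
    by simp
  have "k \<le> j" if "colourable (cycle_power_compl ?n p) j" for j
  proof -
    have "?n \<le> j * (p + 1)"
      using card_verts_le_if_colourable[OF _ card_independent_set_cycle_power_compl that]
        \<open>3 * p < ?n\<close> by (simp add: verts_cycle_power_compl)
    then have "k - 1 < j"
      by (metis add_lessD1 less_add_one mult_less_cancel2 order_less_le_trans)
    then show "k \<le> j"
      by simp
  qed
  moreover have "?n \<le> k * (p + 1)"
    using assms by (cases k) auto
  ultimately have "chromatic_number (cycle_power_compl ?n p) = k"
    by (intro chromatic_number_eqI colourable_cycle_power_compl)
  moreover have "chromatic_number (delete_vertex (cycle_power_compl ?n p) v) < k"
    if "v < ?n" for v
  proof -
    have "colourable (delete_vertex (cycle_power_compl ?n p) v) (k - 1)"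
      using that by (intro colourable_delete_vertex_cycle_power_compl) auto
    then have "chromatic_number (delete_vertex (cycle_power_compl ?n p) v) \<le> k - 1"
      by (rule chromatic_number_le)
    then show ?thesis
      using assms by simp
  qed
  ultimately show ?thesis
    unfolding vertex_critical_def verts_cycle_power_compl by blast
qed

theorem theorem2p7:
  fixes k :: nat
  assumes "k \<ge> 6"
  shows "\<exists>S :: nat graph set. infinite S \<and>
    (\<forall>G\<in>S. fin_graph G \<and> vertex_critical k G \<and>
       H_free two_P2 G \<and> H_free K3_plus_P1 G \<and> H_free C5 G) \<and>
    (\<forall>G\<in>S. \<forall>H\<in>S. G \<noteq> H \<longrightarrow> \<not> graph_iso G H)"
proof -
  define G where "G p = cycle_power_compl ((k - 1) * (p + 1) + 1) p" for p
  have order_determines_p: "p = q" if "card (verts (G p)) = card (verts (G q))" for p q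
    using that assms by (simp add: G_def verts_cycle_power_compl)
  have "inj G"
    by (rule injI) (use order_determines_p in metis)
  moreover have "\<not> graph_iso (G p) (G q)" if "G p \<noteq> G q" for p q
    using that order_determines_p graph_iso_card_verts by metis
  moreover have "fin_graph (G p) \<and> vertex_critical k (G p) \<and>
      H_free two_P2 (G p) \<and> H_free K3_plus_P1 (G p) \<and> H_free C5 (G p)" for p
  proof -
    have "vertex_critical k (G p)"
      unfolding G_def by (rule vertex_critical_cycle_power_compl) (use assms in simp)
    moreover have "5 * (p + 1) \<le> (k - 1) * (p + 1)"
      using assms by (intro mult_right_mono) auto
    ultimately show ?thesis
      unfolding G_def
      by (simp add: fin_graph_cycle_power_compl H_free_2P2_cycle_power_compl
          H_free_K3_plus_P1_cycle_power_compl H_free_C5_cycle_power_compl)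
  qed
  ultimately show ?thesis
    by (intro exI[of _ "range G"]) (auto simp: range_inj_infinite)
qed

end
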